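(* For all integers $n\ge0$ and real numbers $x\in(-1,1)$, $$0<\int_x^1\frac{T_{n+1}(t)\,U_n(t)}{\sqrt{1-t^2}}\,dt\le 1.$$ Equality holds on the right-hand side if and only if $n=0$ and $x=0$.
   Context: $T_j$ and $U_j$ denote the Chebyshev polynomials of the first and second kind of degree $j$: $T_j(\cos t)=\cos(jt)$ and $U_j(\cos t)=\sin((j+1)t)/\sin t$ for $t\in[0,\pi]$. *)

theory Defs
  imports "HOL-Analysis.Analysis"
begin

fun cheb_T :: "nat \<Rightarrow> real \<Rightarrow> real" where
  "cheb_T 0 x = 1"
| "cheb_T (Suc 0) x = x"
| "cheb_T (Suc (Suc n)) x = 2 * x * cheb_T (Suc n) x - cheb_T n x"

fun cheb_U :: "nat \<Rightarrow> real \<Rightarrow> real" where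
  "cheb_U 0 x = 1"
| "cheb_U (Suc 0) x = 2 * x"
| "cheb_U (Suc (Suc n)) x = 2 * x * cheb_U (Suc n) x - cheb_U n x"

end

theory Submission
  imports Defs
begin

text \<open>Substituting \<open>t = cos \<theta>\<close> turns the integrand into
  \<open>cos ((n+1)\<theta>) sin ((n+1)\<theta>) / sin \<theta> = \<Sum>k\<le>n. cos ((2k+1)\<theta>)\<close>, so the integral is
  \<open>S(a) = \<Sum>k\<le>n. sin ((2k+1)a) / (2k+1)\<close> with \<open>a = arccos x \<in> (0,\<pi>)\<close>.
  The numbers \<open>A j = sin\<^sup>2 (j a) / sin a \<ge> 0\<close> have increments \<open>A (j+1) - A j = sin ((2j+1)a)\<close>,
  so summation by parts writes \<open>S(a)\<close> as a positive combination of the \<open>A j\<close>; hence \<open>S(a) > 0\<close>.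
  For the upper bound replace \<open>A j\<close> by its majorant \<open>min (j\<^sup>2 sin a) (1 / sin a)\<close>: the same
  combination of the majorant can be summed in closed form and is at most 1, with equality only
  if \<open>1 / sin a\<close> is an integer, and the term \<open>j = 2\<close> then rules out equality unless \<open>n = 0\<close>.\<close>

lemma cheb_T_cos: "cheb_T k (cos \<theta>) = cos (real k * \<theta>)"
proof (induction k rule: induct_nat_012)
  case (ge2 k)
  have "cos (real (Suc (Suc k)) * \<theta>) + cos (real k * \<theta>)
        = 2 * cos \<theta> * cos (real (Suc k) * \<theta>)"
    using cos_plus_cos[of "real (Suc (Suc k)) * \<theta>" "real k * \<theta>"]
    by (simp add: algebra_simps add_divide_distrib)
  with ge2 show ?case by simp
qed simp_all

lemma cheb_U_cos: "cheb_U k (cos \<theta>) * sin \<theta> = sin (real (Suc k) * \<theta>)"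
proof (induction k rule: induct_nat_012)
  case 1
  show ?case by (simp add: sin_double)
next
  case (ge2 k)
  have "sin (real (Suc (Suc (Suc k))) * \<theta>) + sin (real (Suc k) * \<theta>)
        = 2 * cos \<theta> * sin (real (Suc (Suc k)) * \<theta>)"
    using sin_plus_sin[of "real (Suc (Suc (Suc k))) * \<theta>" "real (Suc k) * \<theta>"]
    by (simp add: algebra_simps add_divide_distrib)
  with ge2 show ?case by (simp add: algebra_simps)
qed simp

lemma continuous_on_cheb_T: "continuous_on S (cheb_T k)"
proof (induction k rule: induct_nat_012)
  case (ge2 k)
  have "cheb_T (Suc (Suc k)) = (\<lambda>x. 2 * x * cheb_T (Suc k) x - cheb_T k x)" by auto
  with ge2 show ?case by (auto intro!: continuous_intros)
qed (auto intro!: continuous_intros)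

lemma continuous_on_cheb_U: "continuous_on S (cheb_U k)"
proof (induction k rule: induct_nat_012)
  case (ge2 k)
  have "cheb_U (Suc (Suc k)) = (\<lambda>x. 2 * x * cheb_U (Suc k) x - cheb_U k x)" by auto
  with ge2 show ?case by (auto intro!: continuous_intros)
qed (auto intro!: continuous_intros)

lemma sin_mult_sum_cos_odd:
  "sin a * (\<Sum>k<m. cos ((2 * real k + 1) * a)) = sin (real m * a) * cos (real m * a)"
proof -
  have "sin a * cos ((2 * real k + 1) * a) = (sin (2 * real (Suc k) * a) - sin (2 * real k * a)) / 2"
    for k by (simp add: sin_times_cos algebra_simps)
  then have "sin a * (\<Sum>k<m. cos ((2 * real k + 1) * a))
             = (\<Sum>k<m. sin (2 * real (Suc k) * a) - sin (2 * real k * a)) / 2"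
    by (simp only: sum_distrib_left sum_divide_distrib)
  also have "\<dots> = sin (2 * (real m * a)) / 2"
    by (subst sum_lessThan_telescope) (simp add: mult.assoc)
  finally show ?thesis by (simp add: sin_double)
qed

lemma cheb_T_Suc_mult_cheb_U:
  assumes "-1 < t" "t < 1"
  shows "cheb_T (Suc n) t * cheb_U n t = (\<Sum>k<Suc n. cos ((2 * real k + 1) * arccos t))"
proof -
  have "sin (arccos t) \<noteq> 0" using assms by (rule sin_arccos_nonzero)
  moreover have "cheb_T (Suc n) t * cheb_U n t * sin (arccos t)
                 = sin (arccos t) * (\<Sum>k<Suc n. cos ((2 * real k + 1) * arccos t))"
    using cheb_T_cos[of "Suc n" "arccos t"] cheb_U_cos[of n "arccos t"] assms
    by (simp only: sin_mult_sum_cos_odd) (simp add: mult.commute)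
  ultimately show ?thesis by simp
qed

lemma abs_sin_nat_mult_le: "\<bar>sin (real j * a)\<bar> \<le> real j * \<bar>sin a\<bar>"
proof (induction j)
  case (Suc j)
  have "\<bar>sin (real (Suc j) * a)\<bar> \<le> \<bar>sin (real j * a)\<bar> * \<bar>cos a\<bar> + \<bar>cos (real j * a)\<bar> * \<bar>sin a\<bar>"
    using sin_add[of "real j * a" a]
      abs_triangle_ineq[of "sin (real j * a) * cos a" "cos (real j * a) * sin a"]
    by (simp add: distrib_right abs_mult add.commute)
  also have "\<dots> \<le> \<bar>sin (real j * a)\<bar> + \<bar>sin a\<bar>"
    by (intro add_mono mult_left_le mult_left_le_one_le) auto
  finally show ?case using Suc by (simp add: algebra_simps)
qed simp

definition odd_sine_sum :: "nat \<Rightarrow> real \<Rightarrow> real" where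
  "odd_sine_sum m a = (\<Sum>k<m. sin ((2 * real k + 1) * a) / (2 * real k + 1))"

definition odd_weighted_increments :: "(nat \<Rightarrow> real) \<Rightarrow> nat \<Rightarrow> real" where
  "odd_weighted_increments c m = (\<Sum>k<m. (c (Suc k) - c k) / (2 * real k + 1))"

lemma odd_weighted_increments_Suc:
  "odd_weighted_increments c (Suc m)
     = odd_weighted_increments c m + (c (Suc m) - c m) / (2 * real m + 1)"
  by (simp add: odd_weighted_increments_def)

lemma odd_weighted_increments_diff:
  "odd_weighted_increments (\<lambda>j. c j - d j) m
     = odd_weighted_increments c m - odd_weighted_increments d m"
  by (simp add: odd_weighted_increments_def sum_subtractf diff_divide_distrib)

lemma odd_weighted_increments_by_parts:
  assumes "c 0 = 0" "1 \<le> m"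
  shows "odd_weighted_increments c m
           = (\<Sum>j\<in>{1..<m}. 2 * c j / ((2 * real j - 1) * (2 * real j + 1)))
             + c m / (2 * real m - 1)"
  using assms(2)
proof (induction m rule: dec_induct)
  case base
  show ?case using assms(1) by (simp add: odd_weighted_increments_def)
next
  case (step m)
  define p q where "p = 2 * real m - 1" and "q = 2 * real m + 1"
  have "p \<noteq> 0" "q \<noteq> 0" "q = p + 2" using step(1) by (simp_all add: p_def q_def)
  then have "c m / p + (c (Suc m) - c m) / q = 2 * c m / (p * q) + c (Suc m) / q"
    by (simp add: divide_simps) (simp add: algebra_simps)
  moreover have "2 * real (Suc m) - 1 = q" by (simp add: q_def)
  ultimately show ?case using step by (simp add: odd_weighted_increments_Suc p_def q_def)
qed

lemma odd_weighted_increments_ge_term: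
  assumes "c 0 = 0" "1 \<le> i" "i \<le> m" and nonneg: "\<And>j. 1 \<le> j \<Longrightarrow> j \<le> m \<Longrightarrow> 0 \<le> c j"
  shows "2 * c i / ((2 * real i - 1) * (2 * real i + 1)) \<le> odd_weighted_increments c m"
proof -
  have weight_pos: "(2 * real j - 1) * (2 * real j + 1) > 0" if "1 \<le> j" for j
    using that by simp
  have last_nonneg: "0 \<le> c m / (2 * real m - 1)" using assms by simp
  show ?thesis
  proof (cases "i = m")
    case True
    have "2 * c m / ((2 * real m - 1) * (2 * real m + 1)) \<le> c m / (2 * real m - 1)"
    proof -
      have "2 / (2 * real m + 1) \<le> 1" using assms by simp
      then have "c m / (2 * real m - 1) * (2 / (2 * real m + 1)) \<le> c m / (2 * real m - 1)"
        using last_nonneg by (rule mult_left_le)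
      then show ?thesis by (simp add: mult.commute)
    qed
    moreover have "0 \<le> (\<Sum>j\<in>{1..<m}. 2 * c j / ((2 * real j - 1) * (2 * real j + 1)))"
      using nonneg weight_pos by (intro sum_nonneg) auto
    ultimately show ?thesis using True assms by (simp add: odd_weighted_increments_by_parts)
  next
    case False
    have "2 * c i / ((2 * real i - 1) * (2 * real i + 1))
          \<le> (\<Sum>j\<in>{1..<m}. 2 * c j / ((2 * real j - 1) * (2 * real j + 1)))"
      using False assms weight_pos by (intro member_le_sum) auto
    with last_nonneg assms show ?thesis by (simp add: odd_weighted_increments_by_parts add_increasing2)
  qed
qed

lemma sin_square_diff: "sin (x::real) ^ 2 - sin y ^ 2 = sin (x + y) * sin (x - y)"
proof -
  have "sin (x + y) * sin (x - y) = sin x ^ 2 * cos y ^ 2 - cos x ^ 2 * sin y ^ 2"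
    unfolding sin_add sin_diff by (simp add: algebra_simps power2_eq_square)
  then show ?thesis by (simp add: cos_squared_eq algebra_simps)
qed

lemma odd_sine_sum_eq_odd_weighted_increments:
  assumes "sin a \<noteq> 0"
  shows "odd_sine_sum m a = odd_weighted_increments (\<lambda>j. sin (real j * a) ^ 2 / sin a) m"
proof -
  have "sin (real (Suc k) * a) ^ 2 - sin (real k * a) ^ 2 = sin ((2 * real k + 1) * a) * sin a" for k
    by (simp add: sin_square_diff algebra_simps)
  then show ?thesis
    using assms unfolding odd_sine_sum_def odd_weighted_increments_def
    by (intro sum.cong) (simp_all add: diff_divide_distrib[symmetric])
qed

lemma odd_weighted_increments_clipped_square:
  "odd_weighted_increments (\<lambda>j. if j \<le> K then real j ^ 2 / u else u) m
     = (if m \<le> K then real m / u else real K / u + (u - real K ^ 2 / u) / (2 * real K + 1))"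
proof (induction m)
  case 0
  show ?case by (simp add: odd_weighted_increments_def)
next
  case (Suc m)
  consider "Suc m \<le> K" | "m = K" | "K < m" by linarith
  then show ?case
  proof cases
    case 1
    have "((1 + real m) ^ 2 / u - real m ^ 2 / u) / (2 * real m + 1) = 1 / u"
      by (simp add: power2_eq_square divide_simps) (simp add: algebra_simps)
    with 1 Suc show ?thesis by (simp add: odd_weighted_increments_Suc add_divide_distrib)
  qed (use Suc in \<open>auto simp: odd_weighted_increments_Suc\<close>)
qed

lemma odd_weighted_increments_clipped_square_le_one:
  assumes "0 < u" "real K \<le> u" "u < real K + 1"
  defines "c \<equiv> \<lambda>j. if j \<le> K then real j ^ 2 / u else u"
  shows "odd_weighted_increments c m \<le> 1"
    and "odd_weighted_increments c m = 1 \<Longrightarrow> u = real K"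
proof -
  have "odd_weighted_increments c m \<le> 1 \<and> (odd_weighted_increments c m = 1 \<longrightarrow> u = real K)"
  proof (cases "m \<le> K")
    case True
    then show ?thesis
      using assms by (auto simp: odd_weighted_increments_clipped_square divide_le_eq_1)
  next
    case False
    define q where "q = (u - real K) * (real K + 1 - u) / (u * (2 * real K + 1))"
    have "odd_weighted_increments c m = 1 - q"
      using False assms(1) unfolding c_def q_def odd_weighted_increments_clipped_square
      by (simp add: divide_simps) (simp add: algebra_simps power2_eq_square)
    moreover have "0 \<le> q" using assms by (simp add: q_def)
    moreover have "q = 0 \<Longrightarrow> u = real K" using assms by (simp add: q_def)
    ultimately show ?thesis by auto
  qed
  then show "odd_weighted_increments c m \<le> 1"
    and "odd_weighted_increments c m = 1 \<Longrightarrow> u = real K"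
    by auto
qed

lemma odd_sine_sum_pos:
  assumes "1 \<le> m" "0 < a" "a < pi"
  shows "0 < odd_sine_sum m a"
proof -
  define A where "A = (\<lambda>j. sin (real j * a) ^ 2 / sin a)"
  have s: "0 < sin a" using assms by (simp add: sin_gt_zero)
  have "2 * A 1 / ((2 * real 1 - 1) * (2 * real 1 + 1)) \<le> odd_weighted_increments A m"
    using assms s by (intro odd_weighted_increments_ge_term) (simp_all add: A_def)
  moreover have "A 1 = sin a" using s by (simp add: A_def power2_eq_square)
  moreover have "odd_sine_sum m a = odd_weighted_increments A m"
    using s by (simp add: odd_sine_sum_eq_odd_weighted_increments A_def)
  ultimately show ?thesis using s by simp
qed

lemma odd_sine_sum_le_one:
  assumes "0 < a" "a < pi"
  shows "odd_sine_sum m a \<le> 1" and "odd_sine_sum m a = 1 \<Longrightarrow> m = 1 \<and> a = pi / 2"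
proof -
  define s where "s = sin a"
  define u where "u = 1 / s"
  define K where "K = nat \<lfloor>u\<rfloor>"
  define A where "A = (\<lambda>j. sin (real j * a) ^ 2 / s)"
  \<comment> \<open>\<open>c j = min (j\<^sup>2 s) (1 / s)\<close>, written with the threshold \<open>K\<close> so that
    \<open>odd_weighted_increments_clipped_square\<close> evaluates its weighted increments\<close>
  define c where "c = (\<lambda>j. if j \<le> K then real j ^ 2 / u else u)"
  have s: "0 < s" "s \<le> 1" using assms by (simp_all add: s_def sin_gt_zero)
  then have u: "0 < u" "real K \<le> u" "u < real K + 1"
    by (simp_all add: u_def K_def)
  have A_le_c: "A j \<le> c j" for j
  proof -
    have "\<bar>sin (real j * a)\<bar> \<le> real j * s"
      using abs_sin_nat_mult_le[of j a] s by (simp add: s_def)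
    then have "sin (real j * a) ^ 2 \<le> (real j * s) ^ 2"
      by (metis abs_ge_zero power2_abs power_mono)
    then have "A j \<le> real j ^ 2 / u"
      using s by (simp add: A_def u_def pos_divide_le_eq power2_eq_square mult_ac)
    moreover have "A j \<le> u"
      using s by (simp add: A_def u_def divide_right_mono abs_square_le_1)
    ultimately show ?thesis by (simp add: c_def)
  qed
  have gap_nonneg: "0 \<le> odd_weighted_increments (\<lambda>j. c j - A j) m"
  proof (cases "m = 0")
    case False
    have "2 * (c 1 - A 1) / ((2 * real 1 - 1) * (2 * real 1 + 1))
          \<le> odd_weighted_increments (\<lambda>j. c j - A j) m"
      using False A_le_c by (intro odd_weighted_increments_ge_term) (simp_all add: A_def c_def)
    with A_le_c[of 1] show ?thesis by simp
  qed (simp add: odd_weighted_increments_def)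
  have sum_eq:
    "odd_sine_sum m a = odd_weighted_increments c m - odd_weighted_increments (\<lambda>j. c j - A j) m"
    using s by (simp add: odd_weighted_increments_diff odd_sine_sum_eq_odd_weighted_increments
        A_def s_def)
  note c_bound = odd_weighted_increments_clipped_square_le_one[OF u, of m, folded c_def]
  show "odd_sine_sum m a \<le> 1" using sum_eq gap_nonneg c_bound(1) by linarith
  assume eq: "odd_sine_sum m a = 1"
  show "m = 1 \<and> a = pi / 2"
  proof (cases "m \<le> 1")
    case True
    then have "m = 1" using eq by (cases m) (simp_all add: odd_sine_sum_def)
    then have "sin a = 1" using eq by (simp add: odd_sine_sum_def)
    then have "cos a = 0" using sin_cos_squared_add[of a] by simp
    then have "arccos (cos a) = pi / 2" by simp
    moreover have "arccos (cos a) = a" using assms by (intro arccos_cos) auto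
    ultimately show ?thesis using \<open>m = 1\<close> by simp
  next
    case False
    have gap_zero: "odd_weighted_increments (\<lambda>j. c j - A j) m = 0" and "u = real K"
      using eq sum_eq gap_nonneg c_bound by linarith+
    have "2 * (c 2 - A 2) / ((2 * real 2 - 1) * (2 * real 2 + 1))
          \<le> odd_weighted_increments (\<lambda>j. c j - A j) m"
      using False A_le_c by (intro odd_weighted_increments_ge_term) (simp_all add: A_def c_def)
    with gap_zero A_le_c[of 2] have "A 2 = c 2" by simp
    moreover have "A 2 = 4 * s * (1 - s ^ 2)"
      using s cos_squared_eq[of a]
      by (simp add: A_def s_def sin_double power_mult_distrib power2_eq_square)
    moreover have "c 2 = (if 2 \<le> K then 4 * s else 1 / s)"
      using s by (simp add: c_def u_def)
    moreover have "K = 1 \<Longrightarrow> s = 1" using \<open>u = real K\<close> s by (simp add: u_def)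
    moreover have "1 \<le> K" using s by (simp add: K_def u_def le_nat_iff)
    ultimately show ?thesis using s by (cases "2 \<le> K") (auto simp: algebra_simps)
  qed
qed

lemma continuous_on_Icc_ereal_tendsto:
  fixes F :: "real \<Rightarrow> real"
  assumes "continuous_on {a..b} F" "a < b"
  shows "((F \<circ> real_of_ereal) \<longlongrightarrow> F a) (at_right (ereal a))"
    and "((F \<circ> real_of_ereal) \<longlongrightarrow> F b) (at_left (ereal b))"
  using continuous_on_Icc_at_rightD[OF assms] continuous_on_Icc_at_leftD[OF assms]
  by (simp_all add: ereal_tendsto_simps1)

lemma interval_integral_FTC_bounded_below:
  fixes f h F H :: "real \<Rightarrow> real" and a b :: real
  assumes "a < b"
    and "continuous_on {a..b} F" "continuous_on {a..b} H"
    and "\<And>t. a < t \<Longrightarrow> t < b \<Longrightarrow> (F has_real_derivative f t) (at t)"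
    and "\<And>t. a < t \<Longrightarrow> t < b \<Longrightarrow> (H has_real_derivative h t) (at t)"
    and "\<And>t. a < t \<Longrightarrow> t < b \<Longrightarrow> isCont f t"
    and "\<And>t. a < t \<Longrightarrow> t < b \<Longrightarrow> isCont h t"
    and "\<And>t. a < t \<Longrightarrow> t < b \<Longrightarrow> 0 \<le> h t"
    and "\<And>t. a < t \<Longrightarrow> t < b \<Longrightarrow> - h t \<le> f t"
  shows "interval_lebesgue_integrable lborel (ereal a) (ereal b) f"
    and "(LBINT t=ereal a..ereal b. f t) = F b - F a"
proof -
  have ab: "ereal a < ereal b" using assms(1) by simp
  have FH: "continuous_on {a..b} (\<lambda>t. F t + H t)"
    using assms(2,3) by (intro continuous_intros)
  note lim_FH = continuous_on_Icc_ereal_tendsto[OF FH assms(1)]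
  note lim_H = continuous_on_Icc_ereal_tendsto[OF assms(3,1)]
  have F': "(F has_real_derivative f t) (at t)" and H': "(H has_real_derivative h t) (at t)"
    and f_cont: "isCont f t" and h_cont: "isCont h t"
    if "ereal a < ereal t" "ereal t < ereal b" for t
    using that assms by auto
  have FH': "((\<lambda>t. F t + H t) has_real_derivative f t + h t) (at t)"
    if "ereal a < ereal t" "ereal t < ereal b" for t
    using F'[OF that] H'[OF that] by (rule DERIV_add)
  have fh_cont: "isCont (\<lambda>t. f t + h t) t" if "ereal a < ereal t" "ereal t < ereal b" for t
    using f_cont[OF that] h_cont[OF that] by (rule isCont_add)
  have "0 \<le> f t + h t" if "a < t" "t < b" for t
    using assms(9)[OF that] by linarith
  then have fh_nonneg:
      "AE t in lborel. ereal a < ereal t \<longrightarrow> ereal t < ereal b \<longrightarrow> 0 \<le> f t + h t"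
    and h_nonneg: "AE t in lborel. ereal a < ereal t \<longrightarrow> ereal t < ereal b \<longrightarrow> 0 \<le> h t"
    using assms(8) by (auto intro!: AE_I2)
  note fh = interval_integral_FTC_nonneg[OF ab FH' fh_cont fh_nonneg lim_FH]
  note h = interval_integral_FTC_nonneg[OF ab H' h_cont h_nonneg lim_H]
  have fh_int: "interval_lebesgue_integrable lborel (ereal a) (ereal b) (\<lambda>t. f t + h t)"
    and h_int: "interval_lebesgue_integrable lborel (ereal a) (ereal b) h"
    using fh(1) h(1) ab by (simp_all add: interval_lebesgue_integrable_def)
  have "f = (\<lambda>t. (f t + h t) - h t)" by simp
  then show "interval_lebesgue_integrable lborel (ereal a) (ereal b) f"
    and "(LBINT t=ereal a..ereal b. f t) = F b - F a"
    using interval_lebesgue_integral_diff[OF fh_int h_int] fh(2) h(2) by auto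
qed

lemma odd_sine_sum_has_real_derivative:
  "(odd_sine_sum m has_real_derivative (\<Sum>k<m. cos ((2 * real k + 1) * a))) (at a)"
proof -
  have "((\<lambda>a. \<Sum>k<m. sin ((2 * real k + 1) * a) / (2 * real k + 1)) has_real_derivative
        (\<Sum>k<m. cos ((2 * real k + 1) * a) * (2 * real k + 1) / (2 * real k + 1))) (at a)"
    by (auto intro!: derivative_eq_intros)
  then show ?thesis by (simp add: odd_sine_sum_def[abs_def])
qed

lemma cheb_TU_weighted_integral:
  assumes "-1 < x" "x < 1"
  shows "interval_lebesgue_integrable lborel (ereal x) 1
           (\<lambda>t. cheb_T (Suc n) t * cheb_U n t / sqrt (1 - t\<^sup>2))"
    and "(LBINT t=ereal x..1. cheb_T (Suc n) t * cheb_U n t / sqrt (1 - t\<^sup>2))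
           = odd_sine_sum (Suc n) (arccos x)"
proof -
  define f where "f t = cheb_T (Suc n) t * cheb_U n t / sqrt (1 - t\<^sup>2)" for t
  define h where "h t = real (Suc n) / sqrt (1 - t\<^sup>2)" for t
  have sqrt_pos: "0 < sqrt (1 - t\<^sup>2)" if "x < t" "t < 1" for t
    using that assms by (simp add: abs_square_less_1)
  have f_eq: "f t = (\<Sum>k<Suc n. cos ((2 * real k + 1) * arccos t)) / sqrt (1 - t\<^sup>2)"
    if "x < t" "t < 1" for t
    using that assms by (simp add: f_def cheb_T_Suc_mult_cheb_U)
  have arccos_deriv: "(arccos has_real_derivative - (1 / sqrt (1 - t\<^sup>2))) (at t)"
    if "x < t" "t < 1" for t
    using DERIV_arccos[of t] that assms by (simp add: divide_inverse)
  have F': "((\<lambda>t. - odd_sine_sum (Suc n) (arccos t)) has_real_derivative f t) (at t)"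
    if "x < t" "t < 1" for t
    using DERIV_minus[OF DERIV_chain2[OF odd_sine_sum_has_real_derivative arccos_deriv[OF that]]]
    by (simp add: f_eq[OF that] del: sum.lessThan_Suc)
  have H': "((\<lambda>t. - real (Suc n) * arccos t) has_real_derivative h t) (at t)"
    if "x < t" "t < 1" for t
  proof -
    have "- real (Suc n) * - (1 / sqrt (1 - t\<^sup>2)) = h t"
      by (simp add: h_def add_divide_distrib diff_divide_distrib)
    then show ?thesis using DERIV_cmult[OF arccos_deriv[OF that], of "- real (Suc n)"] by (simp only:)
  qed
  have f_cont: "isCont f t" and h_cont: "isCont h t" if "x < t" "t < 1" for t
    using sqrt_pos[OF that] continuous_on_cheb_T[of UNIV "Suc n"] continuous_on_cheb_U[of UNIV n]
    by (auto simp: f_def[abs_def] h_def[abs_def] continuous_on_eq_continuous_at intro!: continuous_intros)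
  have h_nonneg: "0 \<le> h t" if "x < t" "t < 1" for t
    using sqrt_pos[OF that] by (simp add: h_def)
  have f_ge: "- h t \<le> f t" if "x < t" "t < 1" for t
  proof -
    have "- real (Suc n) \<le> (\<Sum>k<Suc n. cos ((2 * real k + 1) * arccos t))"
      using sum_mono[of "{..<Suc n}" "\<lambda>_. -1" "\<lambda>k. cos ((2 * real k + 1) * arccos t)"] by simp
    then have "- real (Suc n) / sqrt (1 - t\<^sup>2) \<le> f t"
      using sqrt_pos[OF that] by (simp add: f_eq[OF that] divide_right_mono del: sum.lessThan_Suc)
    then show ?thesis by (simp add: h_def add_divide_distrib diff_divide_distrib)
  qed
  have "continuous_on {x..1} (\<lambda>t. - odd_sine_sum (Suc n) (arccos t))"
    and "continuous_on {x..1} (\<lambda>t. - real (Suc n) * arccos t)"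
    using assms by (auto simp: odd_sine_sum_def intro!: continuous_intros)
  note FTC = interval_integral_FTC_bounded_below[OF assms(2) this F' H' f_cont h_cont h_nonneg f_ge]
  show "interval_lebesgue_integrable lborel (ereal x) 1 (\<lambda>t. cheb_T (Suc n) t * cheb_U n t / sqrt (1 - t\<^sup>2))"
    using FTC(1) by (simp add: f_def[abs_def] one_ereal_def)
  show "(LBINT t=ereal x..1. cheb_T (Suc n) t * cheb_U n t / sqrt (1 - t\<^sup>2)) = odd_sine_sum (Suc n) (arccos x)"
    using FTC(2) by (simp add: f_def[abs_def] one_ereal_def odd_sine_sum_def)
qed

theorem theorem4p5:
  fixes n :: nat and x :: real
  assumes "-1 < x" and "x < 1"
  shows "interval_lebesgue_integrable lborel (ereal x) 1
           (\<lambda>t. cheb_T (Suc n) t * cheb_U n t / sqrt (1 - t\<^sup>2))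
       \<and> 0 < (LBINT t=ereal x..1. cheb_T (Suc n) t * cheb_U n t / sqrt (1 - t\<^sup>2))
       \<and> (LBINT t=ereal x..1. cheb_T (Suc n) t * cheb_U n t / sqrt (1 - t\<^sup>2)) \<le> 1
       \<and> ((LBINT t=ereal x..1. cheb_T (Suc n) t * cheb_U n t / sqrt (1 - t\<^sup>2)) = 1
            \<longleftrightarrow> n = 0 \<and> x = 0)"
proof -
  note integral = cheb_TU_weighted_integral[OF assms, of n]
  have a: "0 < arccos x" "arccos x < pi" using arccos_lt_bounded[OF assms] by auto
  have "odd_sine_sum (Suc n) (arccos x) = 1 \<longleftrightarrow> n = 0 \<and> x = 0"
  proof
    assume "odd_sine_sum (Suc n) (arccos x) = 1"
    then have "n = 0" "arccos x = pi / 2" using odd_sine_sum_le_one(2)[OF a] by auto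
    moreover have "x = cos (arccos x)" using assms by simp
    ultimately show "n = 0 \<and> x = 0" by (metis cos_pi_half)
  qed (simp add: odd_sine_sum_def)
  with integral odd_sine_sum_pos[OF _ a] odd_sine_sum_le_one(1)[OF a] show ?thesis by simp
qed

end
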